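(* Let $H\in\mathbb{R}^{n\times n}$ be symmetric with $\lambda_{\min}(H)<0$ and unit eigenvector $v_1$ for $\lambda_{\min}(H)$, let $g\in\mathbb{R}^n$ with $g^\intercal v_1\neq0$, let $f(z)=\frac12z^\intercal Hz+g^\intercal z$ and $\beta=\|H\|_{\mathrm{op}}$. Let $0<\eta<1/\beta$ and $z_0=-\alpha\frac{g}{\|g\|}$ with $0<\alpha<\min\big(1,\frac{\|g\|^3}{|g^\intercal Hg|}\big)$, and let $z_{t+1}=z_t-\eta\nabla f(z_t)$. Then, as long as the iterates remain in the region $\|z_t\|<1$ (where the projected/proximal gradient step onto the unit ball coincides with this plain gradient step), $\|z_t\|$ is monotonically nondecreasing in $t$.
   Context: $\nabla f(z)=Hz+g$; $\|H\|_{\mathrm{op}}$ is the operator norm. *)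

theory Defs
  imports "HOL-Analysis.Analysis"
begin

definition is_eigenvalue :: "real^'n^'n \<Rightarrow> real \<Rightarrow> bool" where
  "is_eigenvalue H mu \<longleftrightarrow> (\<exists>x. x \<noteq> 0 \<and> H *v x = mu *\<^sub>R x)"

definition is_lambda_min :: "real^'n^'n \<Rightarrow> real \<Rightarrow> bool" where
  "is_lambda_min H lam \<longleftrightarrow> is_eigenvalue H lam \<and> (\<forall>mu. is_eigenvalue H mu \<longrightarrow> lam \<le> mu)"

definition quad_f :: "real^'n^'n \<Rightarrow> real^'n \<Rightarrow> real^'n \<Rightarrow> real" where
  "quad_f H g z = (1/2) * (z \<bullet> (H *v z)) + g \<bullet> z"

definition grad_f :: "real^'n^'n \<Rightarrow> real^'n \<Rightarrow> real^'n \<Rightarrow> real^'n" where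
  "grad_f H g z = H *v z + g"

end

theory Submission
  imports Defs
begin

(* Write A = I - eta H; it is self-adjoint, and positive semidefinite since eta \<parallel>H\<parallel> < 1.
   The iteration is z (t+1) = A (z t) - eta g, so the increments d t = z (t+1) - z t satisfy
   d t = A^t (d 0), and \<parallel>z (t+1)\<parallel>^2 - \<parallel>z t\<parallel>^2 = 2 z t \<bullet> d t + \<parallel>d t\<parallel>^2.  Now
   z t \<bullet> d t = z 0 \<bullet> d t + \<Sum>k<t. d k \<bullet> A^(t-k) (d k) with nonnegative summands, and for
   z 0 = -c g the first term is c (c m (t+1) - (c - eta) m t) with the moments m k = g \<bullet> A^k g.
   Cauchy-Schwarz for the form of A^k makes m log-convex, so m (t+1) / m t is nondecreasing
   and the condition on alpha, which is the case t = 0, propagates to all t. *)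

lemma funpow_self_adjoint:
  fixes A :: "'a::real_inner \<Rightarrow> 'a"
  assumes self_adjoint: "\<And>x y. A x \<bullet> y = x \<bullet> A y"
  shows "(A ^^ k) x \<bullet> y = x \<bullet> (A ^^ k) y"
proof (induction k arbitrary: y)
  case (Suc k)
  have "(A ^^ Suc k) x \<bullet> y = (A ^^ k) x \<bullet> A y" by (simp add: self_adjoint)
  also have "\<dots> = x \<bullet> (A ^^ k) (A y)" by (rule Suc)
  also have "\<dots> = x \<bullet> (A ^^ Suc k) y" by (simp only: funpow_Suc_right o_apply)
  finally show ?case .
qed simp

lemma linear_funpow:
  fixes f :: "'a::real_vector \<Rightarrow> 'a"
  assumes "linear f"
  shows "linear (f ^^ k)"
proof (induction k)
  case 0
  show ?case by (simp add: linear_ident)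
next
  case (Suc k)
  show ?case using linear_compose[OF Suc assms] by (simp add: o_def)
qed

lemma funpow_quadratic_form_nonneg:
  fixes A :: "'a::real_inner \<Rightarrow> 'a"
  assumes self_adjoint: "\<And>x y. A x \<bullet> y = x \<bullet> A y" and nonneg: "\<And>x. 0 \<le> x \<bullet> A x"
  shows "0 \<le> x \<bullet> (A ^^ k) x"
proof (induction k arbitrary: x rule: nat_induct2)
  case (step k)
  have "x \<bullet> (A ^^ (k + 2)) x = x \<bullet> A ((A ^^ Suc k) x)" by (simp add: numeral_2_eq_2)
  also have "\<dots> = A x \<bullet> (A ^^ Suc k) x" by (simp only: self_adjoint)
  also have "\<dots> = A x \<bullet> (A ^^ k) (A x)" by (simp only: funpow_Suc_right o_apply)
  finally show ?case using step by simp
qed (simp_all add: nonneg)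

lemma nonneg_quadratic_discriminant:
  fixes a b c :: real
  assumes nonneg: "\<And>r. 0 \<le> a + 2 * r * b + r\<^sup>2 * c" and "0 \<le> c"
  shows "b\<^sup>2 \<le> a * c"
proof (cases "c = 0")
  case True
  have "b = 0"
  proof (rule ccontr)
    assume "b \<noteq> 0"
    have "0 \<le> a + 2 * (-(a + 1) / (2 * b)) * b" using nonneg[of "-(a + 1) / (2 * b)"] True by simp
    also have "\<dots> = -1" using \<open>b \<noteq> 0\<close> by (simp add: field_simps)
    finally show False by simp
  qed
  then show ?thesis using True by simp
next
  case False
  then have "c > 0" using \<open>0 \<le> c\<close> by simp
  have "0 \<le> a + 2 * (-b / c) * b + (-b / c)\<^sup>2 * c" by (rule nonneg)
  also have "\<dots> = a - b\<^sup>2 / c" using \<open>c > 0\<close> by (simp add: field_simps power2_eq_square)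
  finally show ?thesis using \<open>c > 0\<close> by (simp add: field_simps mult.commute)
qed

lemma self_adjoint_nonneg_cauchy_schwarz:
  fixes T :: "'a::real_inner \<Rightarrow> 'a"
  assumes "linear T" and self_adjoint: "\<And>x y. T x \<bullet> y = x \<bullet> T y"
    and nonneg: "\<And>x. 0 \<le> x \<bullet> T x"
  shows "(u \<bullet> T v)\<^sup>2 \<le> (u \<bullet> T u) * (v \<bullet> T v)"
proof (rule nonneg_quadratic_discriminant)
  fix r :: real
  have "0 \<le> (u + r *\<^sub>R v) \<bullet> T (u + r *\<^sub>R v)" by (rule nonneg)
  also have "\<dots> = u \<bullet> T u + r * (u \<bullet> T v) + r * (v \<bullet> T u) + r\<^sup>2 * (v \<bullet> T v)"
    using \<open>linear T\<close>
    by (simp add: linear_add linear_scale inner_add_left inner_add_right power2_eq_square algebra_simps)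
  also have "v \<bullet> T u = u \<bullet> T v" by (metis self_adjoint inner_commute)
  finally show "0 \<le> u \<bullet> T u + 2 * r * (u \<bullet> T v) + r\<^sup>2 * (v \<bullet> T v)" by simp
qed (rule nonneg)

lemma funpow_moments_log_convex:
  fixes A :: "'a::real_inner \<Rightarrow> 'a"
  assumes "linear A" and self_adjoint: "\<And>x y. A x \<bullet> y = x \<bullet> A y"
    and nonneg: "\<And>x. 0 \<le> x \<bullet> A x"
  shows "(g \<bullet> (A ^^ Suc k) g)\<^sup>2 \<le> (g \<bullet> (A ^^ k) g) * (g \<bullet> (A ^^ Suc (Suc k)) g)"
proof -
  have "(g \<bullet> (A ^^ k) (A g))\<^sup>2 \<le> (g \<bullet> (A ^^ k) g) * (A g \<bullet> (A ^^ k) (A g))"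
    using funpow_self_adjoint[OF self_adjoint] funpow_quadratic_form_nonneg[OF self_adjoint nonneg]
    by (rule self_adjoint_nonneg_cauchy_schwarz[OF linear_funpow[OF \<open>linear A\<close>]])
  moreover have "g \<bullet> (A ^^ k) (A g) = g \<bullet> (A ^^ Suc k) g" by (simp only: funpow_Suc_right o_apply)
  moreover have "A g \<bullet> (A ^^ k) (A g) = g \<bullet> (A ^^ Suc (Suc k)) g"
  proof -
    have "A g \<bullet> (A ^^ k) (A g) = g \<bullet> (A ^^ Suc k) (A g)" by (simp add: self_adjoint)
    also have "\<dots> = g \<bullet> (A ^^ Suc (Suc k)) g" by (simp only: funpow_Suc_right o_apply)
    finally show ?thesis .
  qed
  ultimately show ?thesis by simp
qed

lemma log_convex_ratio_bound:
  fixes m :: "nat \<Rightarrow> real"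
  assumes nonneg: "\<And>k. 0 \<le> m k" and log_convex: "\<And>k. (m (Suc k))\<^sup>2 \<le> m k * m (Suc (Suc k))"
    and "a > 0" and base: "b * m 0 \<le> a * m 1"
  shows "b * m t \<le> a * m (Suc t)"
proof (cases "b \<le> 0")
  case True
  then show ?thesis using nonneg[of t] nonneg[of "Suc t"] \<open>a > 0\<close>
    by (meson mult_nonneg_nonneg mult_nonpos_nonneg order_trans less_imp_le)
next
  case False
  show ?thesis
  proof (induction t)
    case 0 then show ?case using base by simp
  next
    case (Suc k)
    show ?case
    proof (cases "m k = 0")
      case True
      then have "m (Suc k) = 0" using log_convex[of k] by simp
      then show ?thesis using nonneg[of "Suc (Suc k)"] \<open>a > 0\<close> by simp
    next
      case False
      then have "m k > 0" using nonneg[of k] by simp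
      have "m k * (b * m (Suc k)) = m (Suc k) * (b * m k)" by simp
      also have "\<dots> \<le> m (Suc k) * (a * m (Suc k))"
        using Suc nonneg[of "Suc k"] by (simp add: mult_left_mono)
      also have "\<dots> = a * (m (Suc k))\<^sup>2" by (simp add: power2_eq_square)
      also have "\<dots> \<le> a * (m k * m (Suc (Suc k)))" using log_convex[of k] \<open>a > 0\<close> by simp
      also have "\<dots> = m k * (a * m (Suc (Suc k)))" by simp
      finally show ?thesis using \<open>m k > 0\<close> by simp
    qed
  qed
qed

lemma affine_iteration_norm_mono:
  fixes A :: "'a::real_inner \<Rightarrow> 'a" and z :: "nat \<Rightarrow> 'a"
  assumes "linear A" and self_adjoint: "\<And>x y. A x \<bullet> y = x \<bullet> A y"
    and nonneg: "\<And>x. 0 \<le> x \<bullet> A x"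
    and step: "\<And>t. z (Suc t) = A (z t) - b"
    and start: "\<And>t. 0 \<le> z 0 \<bullet> (A ^^ t) (z 1 - z 0)"
  shows "norm (z t) \<le> norm (z (Suc t))"
proof -
  define d where "d t = z (Suc t) - z t" for t
  have d_funpow: "d t = (A ^^ t) (d 0)" for t
  proof (induction t)
    case (Suc t)
    have "d (Suc t) = A (d t)"
      unfolding d_def step[of "Suc t"] step[of t] by (simp add: linear_diff[OF \<open>linear A\<close>])
    then show ?case using Suc by simp
  qed simp
  have increments_nonneg: "0 \<le> d k \<bullet> d t" if "k < t" for k
  proof -
    have "d t = (A ^^ (t - k)) (d k)"
      using that d_funpow[of t] d_funpow[of k] by (metis funpow_add le_add_diff_inverse2 less_imp_le o_apply)
    then show ?thesis using funpow_quadratic_form_nonneg[OF self_adjoint nonneg] by simp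
  qed
  have "z t = z 0 + (\<Sum>k<t. d k)" by (induction t) (simp_all add: d_def)
  then have "z t \<bullet> d t = z 0 \<bullet> d t + (\<Sum>k<t. d k \<bullet> d t)"
    by (simp add: inner_add_left inner_sum_left)
  also have "0 \<le> \<dots>"
    using start[of t] increments_nonneg d_funpow[of t]
    by (intro add_nonneg_nonneg sum_nonneg) (simp_all add: d_def)
  finally have "0 \<le> z t \<bullet> d t" .
  moreover have "z (Suc t) \<bullet> z (Suc t) = z t \<bullet> z t + 2 * (z t \<bullet> d t) + d t \<bullet> d t"
    by (simp add: d_def inner_diff_left inner_diff_right inner_commute)
  ultimately show ?thesis by (simp add: norm_le)
qed

lemma gradient_iteration_start_nonneg:
  fixes A :: "'a::real_inner \<Rightarrow> 'a" and z :: "nat \<Rightarrow> 'a"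
  assumes "linear A" and self_adjoint: "\<And>x y. A x \<bullet> y = x \<bullet> A y"
    and nonneg: "\<And>x. 0 \<le> x \<bullet> A x"
    and "0 \<le> c" and base: "(c - eta) * (g \<bullet> g) \<le> c * (g \<bullet> A g)"
    and step: "\<And>t. z (Suc t) = A (z t) - eta *\<^sub>R g" and z0: "z 0 = - c *\<^sub>R g"
  shows "0 \<le> z 0 \<bullet> (A ^^ t) (z 1 - z 0)"
proof (cases "c = 0")
  case True
  then show ?thesis using z0 by simp
next
  case False
  then have "c > 0" using \<open>0 \<le> c\<close> by simp
  define m where "m k = g \<bullet> (A ^^ k) g" for k
  have "(c - eta) * m t \<le> c * m (Suc t)"
    using funpow_quadratic_form_nonneg[OF self_adjoint nonneg]
      funpow_moments_log_convex[OF \<open>linear A\<close> self_adjoint nonneg] base \<open>c > 0\<close>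
    by (intro log_convex_ratio_bound) (simp_all add: m_def)
  moreover have "z 0 \<bullet> (A ^^ t) (z 1 - z 0) = c * (c * m (Suc t) - (c - eta) * m t)"
  proof -
    have z1: "z 1 = - c *\<^sub>R A g - eta *\<^sub>R g"
      using step[of 0] z0 by (simp add: linear_neg[OF \<open>linear A\<close>] linear_scale[OF \<open>linear A\<close>])
    show ?thesis
      unfolding z1 z0 m_def using linear_funpow[OF \<open>linear A\<close>, of t]
      by (simp add: linear_add linear_diff linear_scale inner_add_right inner_diff_right funpow_swap1 algebra_simps)
  qed
  ultimately show ?thesis using \<open>c > 0\<close> by simp
qed

lemma symmetric_matrix_self_adjoint:
  fixes H :: "real^'n^'n"
  assumes "transpose H = H"
  shows "(H *v x) \<bullet> y = x \<bullet> (H *v y)"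
  by (metis assms dot_lmul_matrix vector_transpose_matrix)

lemma inner_diff_scaled_nonneg:
  fixes f :: "'a::real_inner \<Rightarrow> 'a"
  assumes "bounded_linear f" and "0 \<le> eta" and "eta * onorm f \<le> 1"
  shows "0 \<le> x \<bullet> (x - eta *\<^sub>R f x)"
proof -
  have "x \<bullet> f x \<le> norm x * norm (f x)" by (rule norm_cauchy_schwarz)
  also have "\<dots> \<le> norm x * (onorm f * norm x)"
    by (simp add: mult_left_mono onorm[OF assms(1)])
  finally have "x \<bullet> f x \<le> onorm f * (norm x)\<^sup>2"
    by (simp add: power2_eq_square algebra_simps)
  then have "eta * (x \<bullet> f x) \<le> eta * onorm f * (norm x)\<^sup>2"
    using \<open>0 \<le> eta\<close> by (metis mult.assoc mult_left_mono)
  also have "\<dots> \<le> (norm x)\<^sup>2"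
    using assms by (simp add: mult_left_le_one_le onorm_pos_le)
  finally show ?thesis by (simp add: inner_diff_right power2_norm_eq_inner)
qed

lemma scaled_quadratic_form_bound:
  fixes g :: "'a::real_inner"
  assumes "0 < alpha" and "q \<noteq> 0 \<longrightarrow> alpha < norm g ^ 3 / \<bar>q\<bar>"
  shows "alpha / norm g * q \<le> g \<bullet> g"
proof (cases "q > 0")
  case True
  then have "alpha * q < norm g ^ 3" using assms(2) by (simp add: field_simps)
  then show ?thesis
    by (cases "g = 0") (simp_all add: field_simps power2_norm_eq_inner[symmetric] power3_eq_cube power2_eq_square)
next
  case False
  then have "alpha / norm g * q \<le> 0"
    using \<open>0 < alpha\<close> by (simp add: divide_nonpos_nonneg mult_nonneg_nonpos)
  then show ?thesis by (meson inner_ge_zero order_trans)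
qed

theorem mainTheorem5:
  fixes H :: "real^'n^'n" and g v1 :: "real^'n" and lam eta alpha :: real
    and z :: "nat \<Rightarrow> real^'n"
  assumes symH: "transpose H = H"
    and lmin: "is_lambda_min H lam" and lneg: "lam < 0"
    and v1_unit: "norm v1 = 1" and v1_eig: "H *v v1 = lam *\<^sub>R v1"
    and gv1: "g \<bullet> v1 \<noteq> 0"
    and eta_pos: "0 < eta" and eta_lt: "eta < 1 / onorm (\<lambda>x. H *v x)"
    and alpha_pos: "0 < alpha" and alpha_lt1: "alpha < 1"
    and alpha_lt2: "g \<bullet> (H *v g) \<noteq> 0 \<longrightarrow> alpha < norm g ^ 3 / \<bar>g \<bullet> (H *v g)\<bar>"
    and z0: "z 0 = - (alpha / norm g) *\<^sub>R g"
    and zstep: "\<And>t. z (Suc t) = z t - eta *\<^sub>R grad_f H g (z t)"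
  shows "\<forall>t. (\<forall>s\<le>Suc t. norm (z s) < 1) \<longrightarrow> norm (z t) \<le> norm (z (Suc t))"
proof -
  define A where "A x = x - eta *\<^sub>R (H *v x)" for x
  define c where "c = alpha / norm g"
  have "linear A"
    unfolding A_def by (intro linearI) (simp_all add: matrix_vector_right_distrib algebra_simps)
  have self_adjoint: "A x \<bullet> y = x \<bullet> A y" for x y
    using symmetric_matrix_self_adjoint[OF symH] by (simp add: A_def inner_diff_left inner_diff_right)
  have "eta * onorm ((*v) H) \<le> 1"
    using eta_pos eta_lt onorm_pos_le[OF matrix_vector_mul_bounded_linear, of H]
    by (cases "onorm ((*v) H) = 0") (auto simp: field_simps)
  then have nonneg: "0 \<le> x \<bullet> A x" for x
    unfolding A_def using eta_pos by (intro inner_diff_scaled_nonneg) auto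
  have step: "z (Suc t) = A (z t) - eta *\<^sub>R g" for t
    using zstep[of t] by (simp add: grad_f_def A_def algebra_simps)
  have "c * (g \<bullet> (H *v g)) \<le> g \<bullet> g"
    unfolding c_def using alpha_pos alpha_lt2 by (rule scaled_quadratic_form_bound)
  then have base: "(c - eta) * (g \<bullet> g) \<le> c * (g \<bullet> A g)"
    using eta_pos by (simp add: A_def inner_diff_right algebra_simps mult_left_mono)
  have "0 \<le> c" and "z 0 = - c *\<^sub>R g"
    using alpha_pos z0 by (simp_all add: c_def)
  then have "0 \<le> z 0 \<bullet> (A ^^ t) (z 1 - z 0)" for t
    using gradient_iteration_start_nonneg[where z = z, OF \<open>linear A\<close> self_adjoint nonneg _ base step]
    by blast
  then show ?thesis
    using affine_iteration_norm_mono[where z = z, OF \<open>linear A\<close> self_adjoint nonneg step] by blast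
qed

end
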